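(* If $A$ is a principal ideal domain and $I$ is an ideal of $A$, then the quotient ring $A/I$ is a BL-ring.
   Context: For a commutative unitary ring $R$, its ideals $Id(R)$ form a residuated lattice $(Id(R),\cap,+,\otimes,\rightarrow,\{0\},R)$, ordered by inclusion, where $I+J$ is the ideal sum, $I\otimes J$ the ideal product, and $I\rightarrow J=(J:I)=\{x\in R: xI\subseteq J\}$. A BL-algebra is a residuated lattice satisfying prelinearity $(x\rightarrow y)\vee(y\rightarrow x)=1$ and divisibility $x\odot(x\rightarrow y)=x\wedge y$. A BL-ring is a commutative unitary ring whose lattice of ideals, with this structure, is a BL-algebra. *)

theory Defs
  imports "HOL-Algebra.Ideal_Product" "HOL-Algebra.QuotRing" "HOL-Algebra.Ring_Divisibility"
begin

definition ideal_residuum :: "('a, 'b) ring_scheme \<Rightarrow> 'a set \<Rightarrow> 'a set \<Rightarrow> 'a set" where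
  "ideal_residuum R I J = {x \<in> carrier R. \<forall>i \<in> I. x \<otimes>\<^bsub>R\<^esub> i \<in> J}"

definition ideals_residuated_lattice :: "('a, 'b) ring_scheme \<Rightarrow> bool" where
  "ideals_residuated_lattice R \<longleftrightarrow>
     ideal {\<zero>\<^bsub>R\<^esub>} R \<and> ideal (carrier R) R \<and>
     (\<forall>I. ideal I R \<longrightarrow> {\<zero>\<^bsub>R\<^esub>} \<subseteq> I \<and> I \<subseteq> carrier R) \<and>
     (\<forall>I J. ideal I R \<longrightarrow> ideal J R \<longrightarrow>
        ideal (I \<inter> J) R \<and> ideal (I <+>\<^bsub>R\<^esub> J) R \<and> ideal (I \<cdot>\<^bsub>R\<^esub> J) R \<and>
        ideal (ideal_residuum R I J) R \<and>
        I \<subseteq> I <+>\<^bsub>R\<^esub> J \<and> J \<subseteq> I <+>\<^bsub>R\<^esub> J \<and>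
        (\<forall>K. ideal K R \<longrightarrow> I \<subseteq> K \<longrightarrow> J \<subseteq> K \<longrightarrow> I <+>\<^bsub>R\<^esub> J \<subseteq> K) \<and>
        I \<cdot>\<^bsub>R\<^esub> J = J \<cdot>\<^bsub>R\<^esub> I \<and> I \<cdot>\<^bsub>R\<^esub> carrier R = I) \<and>
     (\<forall>I J K. ideal I R \<longrightarrow> ideal J R \<longrightarrow> ideal K R \<longrightarrow>
        (I \<cdot>\<^bsub>R\<^esub> J) \<cdot>\<^bsub>R\<^esub> K = I \<cdot>\<^bsub>R\<^esub> (J \<cdot>\<^bsub>R\<^esub> K) \<and>
        (I \<cdot>\<^bsub>R\<^esub> J \<subseteq> K \<longleftrightarrow> I \<subseteq> ideal_residuum R J K))"

text \<open>A BL-ring: a commutative unitary ring whose ideal lattice is a BL-algebra,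
  i.e. a residuated lattice satisfying prelinearity and divisibility.\<close>
definition BL_ring :: "('a, 'b) ring_scheme \<Rightarrow> bool" where
  "BL_ring R \<longleftrightarrow> cring R \<and> ideals_residuated_lattice R \<and>
     (\<forall>I J. ideal I R \<longrightarrow> ideal J R \<longrightarrow>
        ideal_residuum R I J <+>\<^bsub>R\<^esub> ideal_residuum R J I = carrier R \<and>
        I \<cdot>\<^bsub>R\<^esub> ideal_residuum R I J = I \<inter> J)"

end

theory Submission
  imports Defs
begin

text \<open>In a principal ideal domain write \<open>P = (a)\<close>, \<open>Q = (b)\<close> and \<open>P + Q = (d)\<close>, so that
  \<open>a = a' d\<close>, \<open>b = b' d\<close> and \<open>d = x a + y b\<close>. Cancelling \<open>d\<close> (the case \<open>d = 0\<close> is trivial)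
  gives \<open>1 = x a' + y b'\<close> with \<open>y b' \<in> (P : Q)\<close> and \<open>x a' \<in> (Q : P)\<close>: prelinearity.
  Every \<open>z \<in> (a) \<inter> Q\<close> is \<open>z = a r\<close> with \<open>r \<in> ((a) : Q)\<close>: divisibility.
  Both facts are statements about single elements of residua, and they pass to every
  surjective image of the ring by pulling ideals back; in particular to \<open>A/I\<close>.\<close>

lemma (in cring) ideal_residuum_is_ideal:
  assumes "ideal I R" "ideal J R"
  shows "ideal (ideal_residuum R I J) R"
proof (rule idealI)
  show "subgroup (ideal_residuum R I J) (add_monoid R)"
  proof (rule add.subgroupI)
    show "ideal_residuum R I J \<noteq> {}"
      using assms by (auto simp: ideal_residuum_def ideal.Icarr additive_subgroup.zero_closed
          ideal.axioms(1) intro!: exI[of _ \<zero>])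
  qed (use assms in \<open>auto simp: ideal_residuum_def ideal.Icarr l_minus l_distr ideal.axioms(1)
          additive_subgroup.a_inv_closed additive_subgroup.a_closed\<close>)
next
  fix a x assume a: "a \<in> ideal_residuum R I J" and x: "x \<in> carrier R"
  then show "x \<otimes> a \<in> ideal_residuum R I J" "a \<otimes> x \<in> ideal_residuum R I J"
    using assms by (auto simp: ideal_residuum_def m_assoc m_lcomm ideal.Icarr ideal.I_l_closed)
qed (rule ring_axioms)

lemma (in cring) ideal_prod_subset_iff_subset_residuum:
  assumes "ideal I R" "ideal J R" "ideal K R"
  shows "I \<cdot> J \<subseteq> K \<longleftrightarrow> I \<subseteq> ideal_residuum R J K"
proof
  assume "I \<cdot> J \<subseteq> K"
  then show "I \<subseteq> ideal_residuum R J K"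
    using assms ideal_prod.prod[of _ I _ J R] by (auto simp: ideal_residuum_def ideal.Icarr)
next
  assume I_res: "I \<subseteq> ideal_residuum R J K"
  show "I \<cdot> J \<subseteq> K"
  proof
    fix s assume "s \<in> I \<cdot> J"
    then show "s \<in> K"
      by (induct s rule: ideal_prod.induct)
        (use I_res assms in \<open>auto simp: ideal_residuum_def additive_subgroup.a_closed ideal.axioms(1)\<close>)
  qed
qed

lemma (in ring) set_add_subset_left:
  assumes "ideal I R" "ideal J R"
  shows "I \<subseteq> I <+>\<^bsub>R\<^esub> J"
  using assms union_genideal genideal_self ideal.axioms(1) additive_subgroup.a_subset
  by (metis Un_subset_iff)

lemma (in ring) set_add_subset_right:
  assumes "ideal I R" "ideal J R"
  shows "J \<subseteq> I <+>\<^bsub>R\<^esub> J"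
  using assms union_genideal genideal_self ideal.axioms(1) additive_subgroup.a_subset
  by (metis Un_subset_iff)

lemma (in ring) set_add_least:
  assumes "ideal I R" "ideal J R" "ideal K R" "I \<subseteq> K" "J \<subseteq> K"
  shows "I <+>\<^bsub>R\<^esub> J \<subseteq> K"
  using assms union_genideal genideal_minimal by (metis Un_subset_iff)

lemma (in cring) ideals_residuated_lattice: "ideals_residuated_lattice R"
  unfolding ideals_residuated_lattice_def
  by (intro conjI allI impI, simp_all add: zeroideal oneideal additive_subgroup.zero_closed
      ideal.axioms(1) ideal.Icarr subsetI i_intersect add_ideals ideal_prod_is_ideal
      ideal_residuum_is_ideal set_add_subset_left set_add_subset_right set_add_least
      ideal_prod_one ideal_prod_assoc ideal_prod_subset_iff_subset_residuum)
    (rule ideal_prod_commute)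

text \<open>The inclusions \<open>(I \<rightarrow> J) + (J \<rightarrow> I) \<subseteq> R\<close> and \<open>I \<cdot> (I \<rightarrow> J) \<subseteq> I \<inter> J\<close> hold in every
  commutative ring, so a BL-ring only needs the converse inclusions, checked elementwise.\<close>

lemma (in cring) BL_ringI:
  assumes prelinear: "\<And>I J. ideal I R \<Longrightarrow> ideal J R \<Longrightarrow>
      \<exists>u \<in> ideal_residuum R I J. \<exists>v \<in> ideal_residuum R J I. u \<oplus> v = \<one>"
    and divisible: "\<And>I J z. ideal I R \<Longrightarrow> ideal J R \<Longrightarrow> z \<in> I \<Longrightarrow> z \<in> J \<Longrightarrow>
      \<exists>p \<in> I. \<exists>w \<in> ideal_residuum R I J. z = p \<otimes> w"
  shows "BL_ring R"
  unfolding BL_ring_def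
proof (intro conjI allI impI is_cring ideals_residuated_lattice)
  fix I J assume I: "ideal I R" and J: "ideal J R"
  have IJ: "ideal (ideal_residuum R I J) R" and JI: "ideal (ideal_residuum R J I) R"
    using I J by (simp_all add: ideal_residuum_is_ideal)
  obtain u v where "u \<in> ideal_residuum R I J" "v \<in> ideal_residuum R J I" "u \<oplus> v = \<one>"
    using prelinear[OF I J] by blast
  then have "\<one> \<in> ideal_residuum R I J <+>\<^bsub>R\<^esub> ideal_residuum R J I"
    unfolding set_add_def' by blast
  then show "ideal_residuum R I J <+>\<^bsub>R\<^esub> ideal_residuum R J I = carrier R"
    by (rule ideal.one_imp_carrier[OF add_ideals[OF IJ JI]])
  have "I \<cdot> ideal_residuum R I J = ideal_residuum R I J \<cdot> I"
    by (rule ideal_prod_commute[OF I IJ])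
  also have "\<dots> \<subseteq> J"
    using ideal_prod_subset_iff_subset_residuum[OF IJ I J] by simp
  finally have "I \<cdot> ideal_residuum R I J \<subseteq> I \<inter> J"
    using ideal_prod_inter[OF I IJ] by blast
  moreover have "I \<inter> J \<subseteq> I \<cdot> ideal_residuum R I J"
  proof
    fix z assume "z \<in> I \<inter> J"
    then obtain p w where "p \<in> I" "w \<in> ideal_residuum R I J" "z = p \<otimes> w"
      using divisible[OF I J] by blast
    then show "z \<in> I \<cdot> ideal_residuum R I J"
      by (simp add: ideal_prod.prod)
  qed
  ultimately show "I \<cdot> ideal_residuum R I J = I \<inter> J" by blast
qed

lemma (in cring) ideal_residuum_cgenideal:
  assumes "a \<in> carrier R" "ideal J R"
  shows "ideal_residuum R (PIdl a) J = {x \<in> carrier R. x \<otimes> a \<in> J}"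
proof -
  have "x \<otimes> (r \<otimes> a) \<in> J" if "x \<in> carrier R" "r \<in> carrier R" "x \<otimes> a \<in> J" for x r
    using that assms by (simp add: m_lcomm ideal.I_l_closed)
  then show ?thesis
    using assms cgenideal_self[of a] by (auto simp: ideal_residuum_def cgenideal_def)
qed

lemma (in principal_domain) ideal_residuum_prelinear:
  assumes P: "ideal P R" and Q: "ideal Q R"
  shows "\<exists>u \<in> ideal_residuum R P Q. \<exists>v \<in> ideal_residuum R Q P. u \<oplus> v = \<one>"
proof -
  obtain a where a: "a \<in> carrier R" "P = PIdl a" using exists_gen[OF P] by blast
  obtain b where b: "b \<in> carrier R" "Q = PIdl b" using exists_gen[OF Q] by blast
  obtain d where d: "d \<in> carrier R" "P <+>\<^bsub>R\<^esub> Q = PIdl d"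
    using exists_gen[OF add_ideals[OF P Q]] by blast
  obtain a' where a': "a' \<in> carrier R" "a = a' \<otimes> d"
    using d a set_add_subset_left[OF P Q] cgenideal_self[of a] by (auto simp: cgenideal_def)
  obtain b' where b': "b' \<in> carrier R" "b = b' \<otimes> d"
    using d b set_add_subset_right[OF P Q] cgenideal_self[of b] by (auto simp: cgenideal_def)
  have "d \<in> P <+>\<^bsub>R\<^esub> Q" using d cgenideal_self[of d] by simp
  then obtain x y where xy: "x \<in> carrier R" "y \<in> carrier R" "d = x \<otimes> a \<oplus> y \<otimes> b"
    using a b unfolding set_add_def' cgenideal_def by blast
  show ?thesis
  proof (cases "d = \<zero>")
    case True
    then have "P = {\<zero>}"
      using a a' d by (auto simp: cgenideal_def intro!: exI[of _ \<zero>])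
    then have "\<one> \<in> ideal_residuum R P Q"
      using Q by (simp add: ideal_residuum_def additive_subgroup.zero_closed ideal.axioms(1))
    moreover have "\<zero> \<in> ideal_residuum R Q P"
      using P Q by (auto simp: ideal_residuum_def ideal.Icarr additive_subgroup.zero_closed ideal.axioms(1))
    ultimately show ?thesis by force
  next
    case False
    have "(x \<otimes> a' \<oplus> y \<otimes> b') \<otimes> d = x \<otimes> (a' \<otimes> d) \<oplus> y \<otimes> (b' \<otimes> d)"
      using xy(1,2) a'(1) b'(1) d(1) by (simp add: l_distr m_assoc)
    also have "\<dots> = \<one> \<otimes> d"
      using d(1) by (simp only: a'(2)[symmetric] b'(2)[symmetric] xy(3)[symmetric] l_one)
    finally have one: "x \<otimes> a' \<oplus> y \<otimes> b' = \<one>"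
      using m_rcancel[OF False d(1)] xy(1,2) a'(1) b'(1) by simp
    have "y \<otimes> b' \<otimes> a = (y \<otimes> a') \<otimes> b"
      unfolding a'(2) b'(2) using xy(2) a'(1) b'(1) d(1) by (simp add: m_ac)
    then have "y \<otimes> b' \<otimes> a \<in> Q"
      unfolding b(2) cgenideal_def using xy(2) a'(1) by blast
    then have u: "y \<otimes> b' \<in> ideal_residuum R P Q"
      using ideal_residuum_cgenideal[OF a(1) Q] a(2) xy(2) b'(1) by simp
    have "x \<otimes> a' \<otimes> b = (x \<otimes> b') \<otimes> a"
      unfolding a'(2) b'(2) using xy(1) a'(1) b'(1) d(1) by (simp add: m_ac)
    then have "x \<otimes> a' \<otimes> b \<in> P"
      unfolding a(2) cgenideal_def using xy(1) b'(1) by blast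
    then have v: "x \<otimes> a' \<in> ideal_residuum R Q P"
      using ideal_residuum_cgenideal[OF b(1) P] b(2) xy(1) a'(1) by simp
    show ?thesis
      using u v one xy(1,2) a'(1) b'(1) by (metis a_comm m_closed)
  qed
qed

lemma (in principal_domain) ideal_residuum_divisible:
  assumes P: "ideal P R" and Q: "ideal Q R" and z: "z \<in> P" "z \<in> Q"
  shows "\<exists>p \<in> P. \<exists>w \<in> ideal_residuum R P Q. z = p \<otimes> w"
proof -
  obtain a where a: "a \<in> carrier R" "P = PIdl a" using exists_gen[OF P] by blast
  obtain r where r: "r \<in> carrier R" "z = r \<otimes> a" using z a by (auto simp: cgenideal_def)
  then have "r \<in> ideal_residuum R P Q"
    using ideal_residuum_cgenideal a Q z by simp
  then show ?thesis
    using a r cgenideal_self[of a] by (metis m_comm)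
qed

lemma (in ring_hom_ring) ideal_residuum_vimage:
  assumes surj: "h ` carrier R = carrier S" and J: "J \<subseteq> carrier S"
    and w: "w \<in> ideal_residuum R {r \<in> carrier R. h r \<in> J} {r \<in> carrier R. h r \<in> K}"
  shows "h w \<in> ideal_residuum S J K"
  unfolding ideal_residuum_def
proof safe
  have w_carr: "w \<in> carrier R" using w by (simp add: ideal_residuum_def)
  then show "h w \<in> carrier S" by simp
  fix c assume c: "c \<in> J"
  then have "c \<in> h ` carrier R" using surj J by blast
  then obtain r where "r \<in> carrier R" "c = h r" by blast
  then show "h w \<otimes>\<^bsub>S\<^esub> c \<in> K"
    using w w_carr c by (auto simp: ideal_residuum_def)
qed

lemma (in ring_hom_ring) BL_ring_image_of_principal_domain:
  assumes "principal_domain R" "cring S" and surj: "h ` carrier R = carrier S"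
  shows "BL_ring S"
proof -
  interpret R: principal_domain R by fact
  interpret S: cring S by fact
  define V where "V J = {r \<in> carrier R. h r \<in> J}" for J
  have V_ideal: "ideal (V J) R" if "ideal J S" for J
    unfolding V_def using ideal_vimage[OF that] .
  have lift: "h w \<in> ideal_residuum S J K"
    if J: "ideal J S" and w: "w \<in> ideal_residuum R (V J) (V K)" for J K w
    using ideal_residuum_vimage[OF surj _ w[unfolded V_def]] J
    by (simp add: additive_subgroup.a_subset ideal.axioms(1))
  show ?thesis
  proof (rule S.BL_ringI)
    fix J K assume J: "ideal J S" and K: "ideal K S"
    obtain u v where u: "u \<in> ideal_residuum R (V J) (V K)"
      and v: "v \<in> ideal_residuum R (V K) (V J)" and uv: "u \<oplus> v = \<one>"
      using R.ideal_residuum_prelinear[OF V_ideal[OF J] V_ideal[OF K]] by blast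
    have "u \<in> carrier R" "v \<in> carrier R" using u v by (simp_all add: ideal_residuum_def)
    then have "h u \<oplus>\<^bsub>S\<^esub> h v = \<one>\<^bsub>S\<^esub>"
      using uv by (simp flip: hom_add)
    then show "\<exists>u \<in> ideal_residuum S J K. \<exists>v \<in> ideal_residuum S K J. u \<oplus>\<^bsub>S\<^esub> v = \<one>\<^bsub>S\<^esub>"
      using lift[OF J u] lift[OF K v] by blast
  next
    fix J K z assume J: "ideal J S" and K: "ideal K S" and z: "z \<in> J" "z \<in> K"
    then have "z \<in> h ` carrier R" using surj ideal.Icarr[OF J z(1)] by blast
    then obtain x where x: "x \<in> carrier R" "z = h x" by blast
    then obtain p w where p: "p \<in> V J" and w: "w \<in> ideal_residuum R (V J) (V K)"
      and x_eq: "x = p \<otimes> w"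
      using R.ideal_residuum_divisible[OF V_ideal[OF J] V_ideal[OF K]] z unfolding V_def by blast
    have "p \<in> carrier R" "w \<in> carrier R" using p w by (simp_all add: V_def ideal_residuum_def)
    then have "z = h p \<otimes>\<^bsub>S\<^esub> h w" using x x_eq by simp
    moreover have "h p \<in> J" using p by (simp add: V_def)
    ultimately show "\<exists>p \<in> J. \<exists>w \<in> ideal_residuum S J K. z = p \<otimes>\<^bsub>S\<^esub> w"
      using lift[OF J w] by blast
  qed
qed

theorem corollary3p8:
  fixes A :: "('a, 'b) ring_scheme" and I :: "'a set"
  assumes "principal_domain A" and "ideal I A"
  shows "BL_ring (A Quot I)"
proof -
  interpret A: principal_domain A by fact
  interpret I: ideal I A by fact
  have "(+>\<^bsub>A\<^esub>) I ` carrier A = carrier (A Quot I)"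
    by (auto simp: FactRing_def A_RCOSETS_def')
  then show ?thesis
    using ring_hom_ring.BL_ring_image_of_principal_domain[OF I.rcos_ring_hom_ring]
      I.quotient_is_cring[OF A.is_cring] assms(1) by blast
qed

end
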